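(* A cubic graph $H$ that is $2$-connected but not $3$-connected can be decomposed, via the $H$-decomposition along nontrivial $2$-edge cuts, into a collection of cubic loopless graphs $\{H_i\}$ each of which is $3$-connected.
   Context: Graphs are finite; multiple edges allowed, loops not. For a cubic graph $G$ with a $2$-edge cut $E_C=\{s_{11}s_{21},s_{12}s_{22}\}$ (the $s_{1j}$ on one side, the $s_{2j}$ on the other), let $G_1',G_2'$ be the subgraphs induced on the two sides of $G\setminus E_C$, and let $G_i$ be $G_i'$ with the edge $s_{i1}s_{i2}$ added; we write $G=G_1\,H\,G_2$. The cut is nontrivial if $G_1$ and $G_2$ each have fewer vertices than $G$. Decomposing via $H$ means repeatedly replacing a graph in the collection (starting from $\{H\}$) by the two graphs $G_1,G_2$ arising from a nontrivial $2$-edge cut of it. *)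

theory Defs
  imports Main "HOL-Library.Multiset"
begin

text \<open>Finite multigraphs: a vertex set and a multiset of edges; an edge is a set of
  one (a loop) or two (an ordinary edge) vertices. Parallel edges are repeated
  elements of the multiset.\<close>

type_synonym 'v mgraph = "'v set \<times> 'v set multiset"

definition mgraph :: "'v mgraph \<Rightarrow> bool" where
  "mgraph G \<longleftrightarrow> finite (fst G) \<and>
     (\<forall>e\<in>#snd G. e \<subseteq> fst G \<and> 1 \<le> card e \<and> card e \<le> 2)"

definition loopless :: "'v mgraph \<Rightarrow> bool" where
  "loopless G \<longleftrightarrow> (\<forall>e\<in>#snd G. card e = 2)"

text \<open>Degree: every incident edge counts once, loops count twice.\<close>
definition degree :: "'v mgraph \<Rightarrow> 'v \<Rightarrow> nat" where
  "degree G v = size {#e \<in># snd G. v \<in> e#} + count (snd G) {v}"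

definition cubic :: "'v mgraph \<Rightarrow> bool" where
  "cubic G \<longleftrightarrow> (\<forall>v\<in>fst G. degree G v = 3)"

definition adj :: "'v set multiset \<Rightarrow> 'v \<Rightarrow> 'v \<Rightarrow> bool" where
  "adj E u v \<longleftrightarrow> (\<exists>e\<in>#E. u \<in> e \<and> v \<in> e \<and> u \<noteq> v)"

definition connected_mg :: "'v set \<Rightarrow> 'v set multiset \<Rightarrow> bool" where
  "connected_mg V E \<longleftrightarrow> V \<noteq> {} \<and> (\<forall>u\<in>V. \<forall>v\<in>V. (adj E)\<^sup>*\<^sup>* u v)"

text \<open>k-edge-connectedness (connectivity of cubic graphs, edge version).\<close>
definition k_connected :: "nat \<Rightarrow> 'v mgraph \<Rightarrow> bool" where
  "k_connected k G \<longleftrightarrow> connected_mg (fst G) (snd G) \<and>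
     (\<forall>F. F \<subseteq># snd G \<and> size F < k \<longrightarrow> connected_mg (fst G) (snd G - F))"

definition split_2cut :: "'v mgraph \<Rightarrow> 'v mgraph \<Rightarrow> 'v mgraph \<Rightarrow> bool" where
  "split_2cut G G1 G2 \<longleftrightarrow>
    (\<exists>S1 S2 s11 s12 s21 s22.
       S1 \<union> S2 = fst G \<and> S1 \<inter> S2 = {} \<and> S1 \<noteq> {} \<and> S2 \<noteq> {} \<and>
       s11 \<in> S1 \<and> s12 \<in> S1 \<and> s21 \<in> S2 \<and> s22 \<in> S2 \<and>
       {#e \<in># snd G. e \<inter> S1 \<noteq> {} \<and> e \<inter> S2 \<noteq> {}#} = {#{s11, s21}, {s12, s22}#} \<and>
       G1 = (S1, add_mset {s11, s12} {#e \<in># snd G. e \<subseteq> S1#}) \<and>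
       G2 = (S2, add_mset {s21, s22} {#e \<in># snd G. e \<subseteq> S2#}) \<and>
       card (fst G1) < card (fst G) \<and> card (fst G2) < card (fst G))"

definition decomp_step :: "'v mgraph multiset \<Rightarrow> 'v mgraph multiset \<Rightarrow> bool" where
  "decomp_step C C' \<longleftrightarrow>
    (\<exists>G G1 G2. G \<in># C \<and> split_2cut G G1 G2 \<and>
       C' = add_mset G1 (add_mset G2 (C - {#G#})))"

end

theory Submission
  imports Defs
begin

(*
  A minimum edge cut of a 2-connected graph that is not 3-connected has exactly two edges
  s11 s21 and s12 s22. Replacing each side by its induced subgraph plus the edge s11 s12 keeps it
  loopless, cubic and 2-connected: s11 \<noteq> s12, since otherwise the third edge at s11 would be a
  bridge; and a path of G between two vertices of the first side becomes a walk in that side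
  once the second side is collapsed onto s11, the cut edge s12 s22 turning into the new edge
  s11 s12. Both sides have fewer vertices, so induction on the number of vertices splits H
  until every piece is 3-connected.
*)

definition cut_edges :: "'v set multiset \<Rightarrow> 'v set \<Rightarrow> 'v set \<Rightarrow> 'v set multiset" where
  "cut_edges E S T = {#e \<in># E. e \<inter> S \<noteq> {} \<and> e \<inter> T \<noteq> {}#}"

lemma rtranclp_map:
  assumes "r\<^sup>*\<^sup>* x y" and "\<And>u v. r u v \<Longrightarrow> f u = f v \<or> s (f u) (f v)"
  shows "s\<^sup>*\<^sup>* (f x) (f y)"
  using assms(1) by induction (auto dest: assms(2) intro: rtranclp.rtrancl_into_rtrancl)

lemma adj_rtranclp_closed:
  assumes "(adj E)\<^sup>*\<^sup>* u v" "u \<in> A" "\<And>e. e \<in># E \<Longrightarrow> e \<inter> A \<noteq> {} \<Longrightarrow> e \<subseteq> A"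
  shows "v \<in> A"
  using assms(1,2)
proof induction
  case (step v w)
  then obtain e where "e \<in># E" "v \<in> e" "w \<in> e" by (auto simp: adj_def)
  with step.IH step.prems have "e \<subseteq> A" by (intro assms(3)) auto
  with \<open>w \<in> e\<close> show ?case by blast
qed

lemma loopless_edge_eq:
  assumes "loopless G" "e \<in># snd G" "u \<in> e" "w \<in> e" "u \<noteq> w"
  shows "e = {u, w}"
proof -
  obtain x y where "e = {x, y}" using assms(1,2) unfolding loopless_def card_2_iff by blast
  with assms(3-5) show ?thesis by auto
qed

lemma size_2_mset:
  assumes "size M = 2" shows "\<exists>a b. M = {#a, b#}"
proof -
  obtain a N where "M = add_mset a N" "size N = 1"
    using assms size_eq_Suc_imp_eq_union[of M 1] by auto
  then show ?thesis using size_1_singleton_mset[of N] by auto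
qed

lemma mset_subset_add_mset_size_less_2_cases:
  assumes "F \<subseteq># add_mset a M" "size F < 2"
  obtains "F = {#}" | "F = {#a#}" | b where "F = {#b#}" "b \<in># M" "b \<noteq> a"
proof (cases "F = {#}")
  case False
  then have "size F \<noteq> 0" by simp
  with assms(2) have "size F = 1" by linarith
  then obtain b where "F = {#b#}" using size_1_singleton_mset by blast
  with assms(1) show thesis using that(2,3) by (cases "b = a") auto
qed (use that(1) in simp)

lemma cut_edges_of_component:
  assumes "S = {w \<in> V. (adj (E - F))\<^sup>*\<^sup>* x w}"
  shows "cut_edges E S (V - S) \<subseteq># F"
proof (rule mset_subset_eqI)
  fix e
  have "count E e \<le> count F e" if crossing: "e \<inter> S \<noteq> {}" "e \<inter> (V - S) \<noteq> {}"
  proof (rule ccontr)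
    assume "\<not> count E e \<le> count F e"
    then have "e \<in># E - F" by (simp add: in_diff_count)
    moreover obtain u w where "u \<in> e" "u \<in> S" "w \<in> e" "w \<in> V - S" using crossing by blast
    ultimately have "(adj (E - F))\<^sup>*\<^sup>* x u" "adj (E - F) u w"
      using assms unfolding adj_def by auto
    then have "w \<in> S" using \<open>w \<in> V - S\<close> assms by (auto intro: rtranclp.rtrancl_into_rtrancl)
    with \<open>w \<in> V - S\<close> show False by simp
  qed
  then show "count (cut_edges E S (V - S)) e \<le> count F e" unfolding cut_edges_def by simp
qed

lemma k_connected_cut_edges_size:
  assumes "mgraph G" "k_connected k G" "S \<subseteq> fst G" "x \<in> S" "y \<in> fst G - S"
  shows "k \<le> size (cut_edges (snd G) S (fst G - S))"
proof (rule ccontr)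
  let ?C = "cut_edges (snd G) S (fst G - S)"
  assume "\<not> k \<le> size ?C"
  moreover have "?C \<subseteq># snd G" unfolding cut_edges_def by simp
  ultimately have "connected_mg (fst G) (snd G - ?C)"
    using assms(2) unfolding k_connected_def by simp
  then have "(adj (snd G - ?C))\<^sup>*\<^sup>* x y" using assms(3-5) unfolding connected_mg_def by auto
  then have "y \<in> S"
  proof (rule adj_rtranclp_closed)
    fix e assume e: "e \<in># snd G - ?C" "e \<inter> S \<noteq> {}"
    then have "e \<subseteq> fst G" using assms(1) unfolding mgraph_def by (auto dest: in_diffD)
    moreover have "count ?C e = count (snd G) e" if "\<not> e \<subseteq> S" "e \<subseteq> fst G"
      using that e(2) unfolding cut_edges_def by auto
    ultimately show "e \<subseteq> S" using e(1) by (auto simp: in_diff_count)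
  qed (fact assms(4))
  with assms(5) show False by simp
qed

lemma loopless_cut_edge:
  assumes "loopless G" "e \<in># cut_edges (snd G) S T" "S \<inter> T = {}"
  obtains a b where "e = {a, b}" "a \<in> S" "b \<in> T"
proof -
  obtain a b where "a \<in> e" "a \<in> S" "b \<in> e" "b \<in> T" "e \<in># snd G"
    using assms(2) unfolding cut_edges_def by auto
  moreover have "a \<noteq> b" using calculation assms(3) by auto
  ultimately show thesis using that loopless_edge_eq[OF assms(1)] by blast
qed

definition side_graph :: "'v mgraph \<Rightarrow> 'v set \<Rightarrow> 'v \<Rightarrow> 'v \<Rightarrow> 'v mgraph" where
  "side_graph G S a b = (S, add_mset {a, b} {#e \<in># snd G. e \<subseteq> S#})"

locale two_edge_cut =
  fixes G :: "'v mgraph" and S1 S2 :: "'v set" and s11 s12 s21 s22 :: 'v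
  assumes mgraph: "mgraph G" and loopless: "loopless G"
    and sides: "S1 \<union> S2 = fst G" "S1 \<inter> S2 = {}"
    and ends: "s11 \<in> S1" "s12 \<in> S1" "s21 \<in> S2" "s22 \<in> S2"
    and cut: "cut_edges (snd G) S1 S2 = {#{s11, s21}, {s12, s22}#}"
begin

lemma swap: "two_edge_cut G S2 S1 s21 s22 s11 s12"
proof
  have "cut_edges (snd G) S2 S1 = cut_edges (snd G) S1 S2"
    unfolding cut_edges_def by (rule filter_mset_cong) auto
  then show "cut_edges (snd G) S2 S1 = {#{s21, s11}, {s22, s12}#}"
    using cut by (simp add: insert_commute)
qed (use mgraph loopless sides ends in auto)

lemma edge_subset_sides: "e \<in># snd G \<Longrightarrow> e \<subseteq> S1 \<union> S2"
  using mgraph sides unfolding mgraph_def by auto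

lemma crossing_edge:
  assumes "e \<in># snd G" "e \<inter> S1 \<noteq> {}" "e \<inter> S2 \<noteq> {}"
  shows "e = {s11, s21} \<or> e = {s12, s22}"
proof -
  have "e \<in># cut_edges (snd G) S1 S2" using assms unfolding cut_edges_def by simp
  then show ?thesis unfolding cut by simp
qed

lemma degree_side:
  assumes "v \<in> S1"
  shows "degree G v = size {#e \<in># snd G. e \<subseteq> S1 \<and> v \<in> e#}
    + (if v = s11 then 1 else 0) + (if v = s12 then 1 else 0)"
proof -
  let ?E = "snd G"
  have "{v} \<notin># ?E" using loopless unfolding loopless_def by fastforce
  then have no_loop: "count ?E {v} = 0" by (simp add: not_in_iff)
  have "{#e \<in># ?E. v \<in> e \<and> \<not> e \<subseteq> S1#} = {#e \<in># cut_edges ?E S1 S2. v \<in> e#}"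
    unfolding cut_edges_def filter_filter_mset
    using assms edge_subset_sides sides(2) by (intro filter_mset_cong) auto
  also have "\<dots> = {#e \<in># {#{s11, s21}, {s12, s22}#}. v \<in> e#}" by (simp only: cut)
  finally have "size {#e \<in># ?E. v \<in> e \<and> \<not> e \<subseteq> S1#}
      = (if v = s11 then 1 else 0) + (if v = s12 then 1 else 0)"
    using assms ends sides(2) by auto
  moreover have "{#e \<in># ?E. v \<in> e#}
      = {#e \<in># ?E. e \<subseteq> S1 \<and> v \<in> e#} + {#e \<in># ?E. v \<in> e \<and> \<not> e \<subseteq> S1#}"
    using multiset_partition[of "{#e \<in># ?E. v \<in> e#}" "\<lambda>e. e \<subseteq> S1"]
    by (simp add: filter_filter_mset conj_commute)
  ultimately show ?thesis unfolding degree_def no_loop by simp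
qed

lemma card_side_less: "card S1 < card (fst G)"
proof -
  have "finite (fst G)" using mgraph unfolding mgraph_def by simp
  then show ?thesis using sides ends by (auto intro!: psubset_card_mono)
qed

lemma split_2cut: "split_2cut G (side_graph G S1 s11 s12) (side_graph G S2 s21 s22)"
proof -
  have "card S1 < card (fst G)" "card S2 < card (fst G)"
    using card_side_less two_edge_cut.card_side_less[OF swap] by auto
  then show ?thesis
    using sides ends cut unfolding split_2cut_def side_graph_def cut_edges_def fst_conv
    by blast
qed

end

lemma exists_two_edge_cut:
  assumes "mgraph G" "loopless G" "k_connected 2 G" "\<not> k_connected 3 G"
  obtains S1 S2 s11 s12 s21 s22 where "two_edge_cut G S1 S2 s11 s12 s21 s22"
proof -
  let ?V = "fst G" and ?E = "snd G"
  obtain F where F: "F \<subseteq># ?E" "size F < 3" "\<not> connected_mg ?V (?E - F)"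
    using assms(3,4) unfolding k_connected_def by auto
  moreover have "?V \<noteq> {}" using assms(3) unfolding k_connected_def connected_mg_def by simp
  ultimately obtain x y where xy: "x \<in> ?V" "y \<in> ?V" "\<not> (adj (?E - F))\<^sup>*\<^sup>* x y"
    unfolding connected_mg_def by blast
  define S1 where "S1 = {w \<in> ?V. (adj (?E - F))\<^sup>*\<^sup>* x w}"
  define S2 where "S2 = ?V - S1"
  have sides: "S1 \<union> S2 = ?V" "S1 \<inter> S2 = {}" "S1 \<subseteq> ?V" unfolding S1_def S2_def by auto
  let ?C = "cut_edges ?E S1 S2"
  have "size ?C \<le> size F"
    using cut_edges_of_component[OF S1_def] unfolding S2_def by (rule size_mset_mono)
  moreover have "2 \<le> size ?C"
    using k_connected_cut_edges_size[OF assms(1,3) sides(3), of x y] xy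
    unfolding S1_def S2_def by simp
  ultimately have "size ?C = 2" using F(2) by linarith
  then obtain c1 c2 where C: "?C = {#c1, c2#}" using size_2_mset by blast
  obtain s11 s21 where "c1 = {s11, s21}" "s11 \<in> S1" "s21 \<in> S2"
    using loopless_cut_edge[OF assms(2) _ sides(2), of c1] C by auto
  moreover obtain s12 s22 where "c2 = {s12, s22}" "s12 \<in> S1" "s22 \<in> S2"
    using loopless_cut_edge[OF assms(2) _ sides(2), of c2] C by auto
  ultimately have "two_edge_cut G S1 S2 s11 s12 s21 s22"
    using assms(1,2) sides C by unfold_locales auto
  then show thesis by (rule that)
qed

locale cubic_two_edge_cut = two_edge_cut +
  assumes cubic: "cubic G" and two_connected: "k_connected 2 G"
begin

lemma swap_cubic: "cubic_two_edge_cut G S2 S1 s21 s22 s11 s12"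
  using swap cubic two_connected
  by (simp add: cubic_two_edge_cut_def cubic_two_edge_cut_axioms_def)

lemma connected_delete_edge: "f \<in># snd G \<Longrightarrow> connected_mg (fst G) (snd G - {#f#})"
  using two_connected unfolding k_connected_def by simp

lemma ends_distinct: "s11 \<noteq> s12"
proof
  assume same: "s11 = s12"
  let ?E = "snd G"
  let ?inner = "{#e \<in># ?E. e \<subseteq> S1 \<and> s11 \<in> e#}"
  have "degree G s11 = 3" using cubic ends sides unfolding cubic_def by auto
  then have "size ?inner = 1" using degree_side[OF ends(1)] same by simp
  then obtain f where inner: "?inner = {#f#}" using size_1_singleton_mset by blast
  then have "f \<in># ?inner" by simp
  then have f: "f \<in># ?E" "f \<subseteq> S1" "s11 \<in> f" by simp_all
  have "count ?inner f = 1" using inner by simp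
  then have count_f: "count ?E f = 1" using f by simp
  obtain b where b: "b \<in> f" "b \<noteq> s11"
    using loopless f unfolding loopless_def card_2_iff by fastforce
  have closed: "e \<subseteq> S1 - {s11}"
    if e: "e \<in># ?E - {#f#}" "e \<inter> (S1 - {s11}) \<noteq> {}" for e
  proof -
    have eE: "e \<in># ?E" using e(1) by (rule in_diffD)
    have "e \<subseteq> S1"
    proof (rule ccontr)
      assume "\<not> e \<subseteq> S1"
      then have "e \<inter> S2 \<noteq> {}" using edge_subset_sides[OF eE] by auto
      then have "e = {s11, s21} \<or> e = {s11, s22}" using crossing_edge eE e(2) same by blast
      then show False using e(2) ends sides(2) by auto
    qed
    moreover have "s11 \<notin> e"
    proof
      assume "s11 \<in> e"
      with eE \<open>e \<subseteq> S1\<close> have "e \<in># ?inner" by simp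
      then have "e = f" using inner by simp
      then show False using e(1) count_f by (simp add: in_diff_count)
    qed
    ultimately show ?thesis by blast
  qed
  have "(adj (?E - {#f#}))\<^sup>*\<^sup>* b s11"
    using connected_delete_edge[OF f(1)] b f ends sides unfolding connected_mg_def by blast
  then have "s11 \<in> S1 - {s11}" by (rule adj_rtranclp_closed) (use b f closed in auto)
  then show False by simp
qed

lemma count_second_cut_edge: "count (snd G) {s12, s22} = 1"
proof -
  have "{s11, s21} \<noteq> {s12, s22}"
    using ends_distinct ends sides(2) by (auto simp: doubleton_eq_iff)
  then have "count (cut_edges (snd G) S1 S2) {s12, s22} = 1" by (simp add: cut)
  then show ?thesis using ends unfolding cut_edges_def by simp
qed

lemma mgraph_side: "mgraph (side_graph G S1 s11 s12)"
proof -
  have "finite S1" using mgraph sides(1) unfolding mgraph_def by (metis finite_Un)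
  then show ?thesis
    using mgraph ends ends_distinct unfolding mgraph_def side_graph_def by auto
qed

lemma loopless_side: "loopless (side_graph G S1 s11 s12)"
  using loopless ends_distinct unfolding loopless_def side_graph_def by auto

lemma cubic_side: "cubic (side_graph G S1 s11 s12)"
  unfolding cubic_def
proof
  fix v assume "v \<in> fst (side_graph G S1 s11 s12)"
  then have v: "v \<in> S1" by (simp add: side_graph_def)
  have "{v} \<notin># snd G" using loopless unfolding loopless_def by fastforce
  moreover have "{s11, s12} \<noteq> {v}" using ends_distinct by auto
  ultimately have "count (snd (side_graph G S1 s11 s12)) {v} = 0"
    by (simp add: side_graph_def not_in_iff)
  moreover have "degree G v = 3" using cubic v sides unfolding cubic_def by auto
  ultimately show "degree (side_graph G S1 s11 s12) v = 3"
    using degree_side[OF v] ends_distinct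
    by (auto simp: degree_def side_graph_def filter_filter_mset conj_commute)
qed

definition collapse where
  "collapse w = (if w \<in> S1 then w else s11)"

lemma collapse_adj:
  assumes "e \<in># snd G" "x \<in> e" "y \<in> e" "x \<noteq> y"
    and "e \<subseteq> S1 \<Longrightarrow> e \<in># E'" and "e = {s12, s22} \<Longrightarrow> {s11, s12} \<in># E'"
  shows "collapse x = collapse y \<or> adj E' (collapse x) (collapse y)"
proof (cases "e \<subseteq> S1")
  case True
  then have "collapse x = x" "collapse y = y" "e \<in># E'"
    using assms(2,3,5) by (auto simp: collapse_def)
  then show ?thesis using assms(2-4) unfolding adj_def by auto
next
  case outside: False
  show ?thesis
  proof (cases "e \<inter> S1 = {}")
    case True
    then show ?thesis using assms(2,3) by (auto simp: collapse_def)
  next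
    case False
    with outside have "e = {s11, s21} \<or> e = {s12, s22}"
      using crossing_edge assms(1) edge_subset_sides[OF assms(1)] by blast
    then show ?thesis
    proof
      assume "e = {s11, s21}"
      then have "collapse x = s11" "collapse y = s11"
        using assms(2,3) ends sides(2) by (auto simp: collapse_def)
      then show ?thesis by simp
    next
      assume e: "e = {s12, s22}"
      then have "collapse x \<in> {s11, s12}" "collapse y \<in> {s11, s12}"
        using assms(2,3) ends sides(2) by (auto simp: collapse_def)
      moreover have "{s11, s12} \<in># E'" using assms(6) e by simp
      ultimately show ?thesis unfolding adj_def by blast
    qed
  qed
qed

lemma side_connected:
  assumes "connected_mg (fst G) D" "D \<subseteq># snd G"
    and "\<And>e. e \<in># D \<Longrightarrow> e \<subseteq> S1 \<Longrightarrow> e \<in># E'"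
    and "{s12, s22} \<in># D \<Longrightarrow> {s11, s12} \<in># E'"
  shows "connected_mg S1 E'"
  unfolding connected_mg_def
proof (intro conjI ballI)
  show "S1 \<noteq> {}" using ends by auto
  fix u v assume "u \<in> S1" "v \<in> S1"
  have "(adj D)\<^sup>*\<^sup>* u v"
    using assms(1) \<open>u \<in> S1\<close> \<open>v \<in> S1\<close> sides unfolding connected_mg_def by auto
  then have "(adj E')\<^sup>*\<^sup>* (collapse u) (collapse v)"
  proof (rule rtranclp_map)
    fix x y assume "adj D x y"
    then obtain e where "e \<in># D" "x \<in> e" "y \<in> e" "x \<noteq> y" unfolding adj_def by blast
    then show "collapse x = collapse y \<or> adj E' (collapse x) (collapse y)"
      using assms(2-4) by (intro collapse_adj) (auto dest: mset_subset_eqD)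
  qed
  then show "(adj E')\<^sup>*\<^sup>* u v" using \<open>u \<in> S1\<close> \<open>v \<in> S1\<close> by (simp add: collapse_def)
qed

lemma two_connected_side: "k_connected 2 (side_graph G S1 s11 s12)"
proof -
  let ?E = "snd G"
  let ?E1 = "{#e \<in># ?E. e \<subseteq> S1#}"
  let ?n = "{s11, s12}"
  have deleted: "connected_mg S1 (add_mset ?n ?E1 - F)"
    if "F \<subseteq># add_mset ?n ?E1" "size F < 2" for F
    using that
  proof (cases rule: mset_subset_add_mset_size_less_2_cases)
    case 1
    have "connected_mg (fst G) ?E" using two_connected unfolding k_connected_def by simp
    then show ?thesis by (rule side_connected) (auto simp: 1)
  next
    case 2
    have "{s12, s22} \<in># ?E" using count_second_cut_edge by (intro count_inI) simp
    from connected_delete_edge[OF this] show ?thesis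
    proof (rule side_connected)
      show "e \<in># add_mset ?n ?E1 - F" if "e \<in># ?E - {#{s12, s22}#}" "e \<subseteq> S1" for e
        using that by (auto simp: 2 dest: in_diffD)
      show "?n \<in># add_mset ?n ?E1 - F" if "{s12, s22} \<in># ?E - {#{s12, s22}#}"
        using that count_second_cut_edge by (simp add: in_diff_count)
    qed simp
  next
    case (3 f)
    from 3(2) have "f \<in># ?E" by simp
    from connected_delete_edge[OF this] show ?thesis
      by (rule side_connected) (use 3 in \<open>auto simp: in_diff_count\<close>)
  qed
  then show ?thesis
    unfolding k_connected_def side_graph_def fst_conv snd_conv
    using deleted[of "{#}"] by simp
qed

end

lemma decomp_step_rtranclp_add:
  assumes "decomp_step\<^sup>*\<^sup>* A B"
  shows "decomp_step\<^sup>*\<^sup>* (A + D) (B + D)"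
  using assms
proof induction
  case (step B B')
  then obtain G G1 G2 where "G \<in># B" "split_2cut G G1 G2"
      "B' = add_mset G1 (add_mset G2 (B - {#G#}))"
    unfolding decomp_step_def by blast
  then have "decomp_step (B + D) (B' + D)"
    unfolding decomp_step_def by (intro exI[of _ G] exI[of _ G1] exI[of _ G2]) simp
  with step.IH show ?case by simp
qed simp

lemma decomp_step_rtranclp_split:
  assumes "split_2cut G G1 G2" "decomp_step\<^sup>*\<^sup>* {#G1#} C1" "decomp_step\<^sup>*\<^sup>* {#G2#} C2"
  shows "decomp_step\<^sup>*\<^sup>* {#G#} (C1 + C2)"
proof -
  have "decomp_step {#G#} ({#G1#} + {#G2#})"
    unfolding decomp_step_def using assms(1)
    by (intro exI[of _ G] exI[of _ G1] exI[of _ G2]) simp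
  also have "decomp_step\<^sup>*\<^sup>* ({#G1#} + {#G2#}) (C1 + {#G2#})"
    using decomp_step_rtranclp_add[OF assms(2)] .
  also have "decomp_step\<^sup>*\<^sup>* (C1 + {#G2#}) (C1 + C2)"
    using decomp_step_rtranclp_add[OF assms(3), of C1] by (simp add: add.commute)
  finally show ?thesis .
qed

lemma decomposition_into_3_connected:
  assumes "mgraph G" "loopless G" "cubic G" "k_connected 2 G"
  shows "\<exists>C. decomp_step\<^sup>*\<^sup>* {#G#} C \<and>
           (\<forall>G\<in>#C. mgraph G \<and> cubic G \<and> loopless G \<and> k_connected 3 G)"
  using assms
proof (induction "card (fst G)" arbitrary: G rule: less_induct)
  case less
  show ?case
  proof (cases "k_connected 3 G")
    case True
    with less.prems show ?thesis by (intro exI[of _ "{#G#}"]) simp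
  next
    case False
    obtain S1 S2 s11 s12 s21 s22 where cut: "two_edge_cut G S1 S2 s11 s12 s21 s22"
      by (rule exists_two_edge_cut[OF less.prems(1,2,4) False])
    interpret cut: cubic_two_edge_cut G S1 S2 s11 s12 s21 s22
      by (rule cubic_two_edge_cut.intro[OF cut cubic_two_edge_cut_axioms.intro[OF less.prems(3,4)]])
    interpret cut': cubic_two_edge_cut G S2 S1 s21 s22 s11 s12
      by (rule cut.swap_cubic)
    have "card (fst (side_graph G S1 s11 s12)) < card (fst G)"
      "card (fst (side_graph G S2 s21 s22)) < card (fst G)"
      using cut.card_side_less cut'.card_side_less by (simp_all add: side_graph_def)
    from less.hyps[OF this(1) cut.mgraph_side cut.loopless_side cut.cubic_side cut.two_connected_side]
      less.hyps[OF this(2) cut'.mgraph_side cut'.loopless_side cut'.cubic_side cut'.two_connected_side]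
    obtain C1 C2 where
        C1: "decomp_step\<^sup>*\<^sup>* {#side_graph G S1 s11 s12#} C1"
          "\<forall>G\<in>#C1. mgraph G \<and> cubic G \<and> loopless G \<and> k_connected 3 G" and
        C2: "decomp_step\<^sup>*\<^sup>* {#side_graph G S2 s21 s22#} C2"
          "\<forall>G\<in>#C2. mgraph G \<and> cubic G \<and> loopless G \<and> k_connected 3 G"
      by blast
    have "decomp_step\<^sup>*\<^sup>* {#G#} (C1 + C2)"
      using cut.split_2cut C1(1) C2(1) by (rule decomp_step_rtranclp_split)
    with C1(2) C2(2) show ?thesis by (intro exI[of _ "C1 + C2"]) auto
  qed
qed

theorem theorem3:
  fixes H :: "'v mgraph"
  assumes "mgraph H" and "loopless H" and "cubic H"
    and "k_connected 2 H" and "\<not> k_connected 3 H"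
  shows "\<exists>C. decomp_step\<^sup>*\<^sup>* {#H#} C \<and>
           (\<forall>G\<in>#C. mgraph G \<and> cubic G \<and> loopless G \<and> k_connected 3 G)"
  using decomposition_into_3_connected assms(1-4) .

end
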